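(* Consider a series system of two components $c_1,c_2$ (so $\phi(s)=1$ iff $s_1=s_2=1$) with independent states, perfect inspections ($y_k=s_k$), equal repair costs $C_{R,1}=C_{R,2}=C_R$ and $0\le C_R\le C_F/2$. Then for $\{i,j\}=\{1,2\}$, $$L^L_\omega(i)=p_iC_R+\min\{C_R,\;p_jC_F\}.$$ Moreover, if both $p_1$ and $p_2$ are at most $\tilde p=C_R/C_F$, then the component with the larger marginal failure probability has the (weakly) larger local value of information: $p_i\ge p_j\Rightarrow \mathrm{VoI}_L(i)\ge\mathrm{VoI}_L(j)$.
   Context: Components $c_1,c_2$ have binary states $s_k\in\{0,1\}$ ($1$: working, $0$: failed) with marginal failure probabilities $p_k=\mathbb{P}[s_k=0]$; $C_F>0$ is the cost of system failure. Local metric: an action is $A=(a_1,a_2)\in\{0,1\}^2$ ($a_k=1$: replace $c_k$); replacement is perfect, so the post-action state has $s'_k=1$ if $a_k=1$ and $s'_k=s_k$ otherwise. The loss is $\mathcal{L}(s',A)=C_F(1-\phi(s'))+\sum_k a_kC_{R,k}$. The prior loss is $L^L_\pi=\min_A\mathbb{E}[\mathcal{L}(s',A)]$; inspecting $c_i$ gives observation $y_i$, with posterior loss $L^L_{\omega|y_i=c}=\min_A\mathbb{E}[\mathcal{L}(s',A)\mid y_i=c]$ and expected posterior loss $L^L_\omega(i)=\mathbb{P}[y_i=0]L^L_{\omega|y_i=0}+\mathbb{P}[y_i=1]L^L_{\omega|y_i=1}$ (terms with zero probability omitted); $\mathrm{VoI}_L(i)=L^L_\pi-L^L_\omega(i)$.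 *)

theory Defs
  imports Complex_Main
begin

(* A system state / action is a pair (component 1, component 2) of booleans.
   State: True = working, False = failed.  Action: True = replace. *)
type_synonym state2 = "bool \<times> bool"
type_synonym action2 = "bool \<times> bool"

definition comp :: "nat \<Rightarrow> bool \<times> bool \<Rightarrow> bool" where
  "comp k x = (if k = 1 then fst x else snd x)"

definition series_phi :: "state2 \<Rightarrow> bool" where
  "series_phi s = (fst s \<and> snd s)"

definition post_state :: "state2 \<Rightarrow> action2 \<Rightarrow> state2" where
  "post_state s A = (fst A \<or> fst s, snd A \<or> snd s)"

definition loss :: "(state2 \<Rightarrow> bool) \<Rightarrow> real \<Rightarrow> real \<Rightarrow> real \<Rightarrow> state2 \<Rightarrow> action2 \<Rightarrow> real" where
  "loss phi CF CR1 CR2 s A =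
     CF * (if phi (post_state s A) then 0 else 1)
     + (if fst A then CR1 else 0) + (if snd A then CR2 else 0)"

definition indep_prob :: "(nat \<Rightarrow> real) \<Rightarrow> state2 \<Rightarrow> real" where
  "indep_prob p s = (if fst s then 1 - p 1 else p 1) * (if snd s then 1 - p 2 else p 2)"

definition prior_loss :: "(state2 \<Rightarrow> real) \<Rightarrow> (state2 \<Rightarrow> bool) \<Rightarrow> real \<Rightarrow> real \<Rightarrow> real \<Rightarrow> real" where
  "prior_loss P phi CF CR1 CR2 =
     Min ((\<lambda>A. \<Sum>s\<in>UNIV. P s * loss phi CF CR1 CR2 s A) ` UNIV)"

(* perfect inspection of component i: y_i = s_i *)
definition obs_prob :: "(state2 \<Rightarrow> real) \<Rightarrow> nat \<Rightarrow> bool \<Rightarrow> real" where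
  "obs_prob P i c = (\<Sum>s\<in>{s. comp i s = c}. P s)"

definition post_loss :: "(state2 \<Rightarrow> real) \<Rightarrow> (state2 \<Rightarrow> bool) \<Rightarrow> real \<Rightarrow> real \<Rightarrow> real \<Rightarrow> nat \<Rightarrow> bool \<Rightarrow> real" where
  "post_loss P phi CF CR1 CR2 i c =
     Min ((\<lambda>A. (\<Sum>s\<in>{s. comp i s = c}. P s * loss phi CF CR1 CR2 s A) / obs_prob P i c) ` UNIV)"

definition exp_post_loss :: "(state2 \<Rightarrow> real) \<Rightarrow> (state2 \<Rightarrow> bool) \<Rightarrow> real \<Rightarrow> real \<Rightarrow> real \<Rightarrow> nat \<Rightarrow> real" where
  "exp_post_loss P phi CF CR1 CR2 i =
     (\<Sum>c\<in>UNIV. if obs_prob P i c = 0 then 0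
                 else obs_prob P i c * post_loss P phi CF CR1 CR2 i c)"

definition VoI_L :: "(state2 \<Rightarrow> real) \<Rightarrow> (state2 \<Rightarrow> bool) \<Rightarrow> real \<Rightarrow> real \<Rightarrow> real \<Rightarrow> nat \<Rightarrow> real" where
  "VoI_L P phi CF CR1 CR2 i = prior_loss P phi CF CR1 CR2 - exp_post_loss P phi CF CR1 CR2 i"

end

theory Submission
  imports Defs
begin

(* Once component i is inspected, only the decision about component j is uncertain: replacing it
   costs C_R, keeping it risks p_j C_F, so the best conditional loss is min{C_R, p_j C_F}.  If c_i
   is found failed, it must additionally be replaced (at cost C_R), since leaving the system down
   costs C_F >= 2 C_R.  Averaging over y_i gives p_i C_R + min{C_R, p_j C_F}.  When both p_k are
   at most C_R/C_F the minimum is p_j C_F, and VoI_L(i) - VoI_L(j) = (p_i - p_j)(C_F - C_R). *)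

lemma comp_fiber:
  "{s. comp 1 s = c} = {(c, True), (c, False)}"
  "{s. comp 2 s = c} = {(True, c), (False, c)}"
  by (auto simp: comp_def)

lemma UNIV_bool_pair:
  "(UNIV :: (bool \<times> bool) set) = {(True, True), (True, False), (False, True), (False, False)}"
  by auto

lemma component_pair_cases:
  assumes "{i, j} = {1, 2::nat}"
  obtains "i = 1" "j = 2" | "i = 2" "j = 1"
  using assms by (metis doubleton_eq_iff)

lemma obs_prob_indep_prob:
  assumes "i \<in> {1, 2}"
  shows "obs_prob (indep_prob p) i c = (if c then 1 - p i else p i)"
proof -
  from assms consider "i = 1" | "i = 2" by blast
  then show ?thesis
    by cases (simp_all only: obs_prob_def comp_fiber, simp_all add: indep_prob_def algebra_simps)
qed

lemma surj_comp_pair: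
  assumes "{i, j} = {1, 2::nat}"
  shows "surj (\<lambda>A. (comp i A, comp j A))"
proof -
  have "(a, b) \<in> range (\<lambda>A. (comp i A, comp j A))" for a b
    using assms by (cases rule: component_pair_cases) (auto simp: comp_def image_iff)
  then show ?thesis by auto
qed

(* Conditional expected loss, given y_i = c, of an action with (a_i, a_j) = a, where q = p_j. *)
definition series_cond_loss :: "real \<Rightarrow> real \<Rightarrow> real \<Rightarrow> bool \<Rightarrow> bool \<times> bool \<Rightarrow> real" where
  "series_cond_loss CF CR q c a =
     CR * (of_bool (fst a) + of_bool (snd a))
     + CF * (if fst a \<or> c then (if snd a then 0 else q) else 1)"

lemma sum_fiber_indep_series_loss:
  assumes "{i, j} = {1, 2::nat}"
  shows "(\<Sum>s\<in>{s. comp i s = c}. indep_prob p s * loss series_phi CF CR CR s A)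
       = obs_prob (indep_prob p) i c * series_cond_loss CF CR (p j) c (comp i A, comp j A)"
  using assms
  by (cases rule: component_pair_cases; simp only: obs_prob_def comp_fiber; cases A; cases c)
     (simp_all add: indep_prob_def loss_def post_state_def series_phi_def
        series_cond_loss_def comp_def algebra_simps)

lemma post_loss_indep_series:
  assumes "{i, j} = {1, 2::nat}" and "obs_prob (indep_prob p) i c \<noteq> 0"
  shows "post_loss (indep_prob p) series_phi CF CR CR i c
       = Min (range (series_cond_loss CF CR (p j) c))"
proof -
  have "(\<lambda>A. (\<Sum>s\<in>{s. comp i s = c}. indep_prob p s * loss series_phi CF CR CR s A)
              / obs_prob (indep_prob p) i c)
        = series_cond_loss CF CR (p j) c \<circ> (\<lambda>A. (comp i A, comp j A))"
    using assms by (simp add: sum_fiber_indep_series_loss fun_eq_iff)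
  then show ?thesis
    unfolding post_loss_def by (simp only: image_comp[symmetric] surj_comp_pair[OF assms(1)])
qed

lemma Min_series_cond_loss:
  assumes "0 \<le> q" "q \<le> 1" "0 \<le> CR" "2 * CR \<le> CF"
  shows "Min (range (series_cond_loss CF CR q c)) = (if c then 0 else CR) + min CR (q * CF)"
proof -
  have "q * CF \<le> CF" using assms by (simp add: mult_left_le_one_le)
  then show ?thesis
    unfolding UNIV_bool_pair
    using assms by (cases c) (simp_all add: series_cond_loss_def min_def algebra_simps)
qed

lemma exp_post_loss_eq_sum:
  assumes "\<And>c. obs_prob P i c \<noteq> 0 \<Longrightarrow> post_loss P phi CF CR1 CR2 i c = v c"
  shows "exp_post_loss P phi CF CR1 CR2 i = (\<Sum>c\<in>UNIV. obs_prob P i c * v c)"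
  unfolding exp_post_loss_def using assms by (intro sum.cong) auto

lemma exp_post_loss_indep_series:
  assumes "{i, j} = {1, 2::nat}" and "0 \<le> p j" "p j \<le> 1" and "0 \<le> CR" "2 * CR \<le> CF"
  shows "exp_post_loss (indep_prob p) series_phi CF CR CR i = p i * CR + min CR (p j * CF)"
proof -
  have "i \<in> {1, 2}" using assms(1) by blast
  have "exp_post_loss (indep_prob p) series_phi CF CR CR i
      = (\<Sum>c\<in>UNIV. obs_prob (indep_prob p) i c * ((if c then 0 else CR) + min CR (p j * CF)))"
    using assms by (intro exp_post_loss_eq_sum) (simp add: post_loss_indep_series Min_series_cond_loss)
  also have "\<dots> = p i * CR + min CR (p j * CF)"
    by (simp add: obs_prob_indep_prob[OF \<open>i \<in> {1, 2}\<close>] UNIV_bool algebra_simps)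
  finally show ?thesis .
qed

lemma VoI_L_indep_series_mono:
  assumes ij: "{i, j} = {1, 2::nat}"
    and "0 \<le> p i" "p i \<le> 1" "0 \<le> p j" "p j \<le> 1" and "0 \<le> CR" "2 * CR \<le> CF"
    and "p i * CF \<le> CR" "p j * CF \<le> CR" and "p j \<le> p i"
  shows "VoI_L (indep_prob p) series_phi CF CR CR j \<le> VoI_L (indep_prob p) series_phi CF CR CR i"
proof -
  have ji: "{j, i} = {1, 2::nat}" using ij by auto
  have "VoI_L (indep_prob p) series_phi CF CR CR i - VoI_L (indep_prob p) series_phi CF CR CR j
      = (p i - p j) * (CF - CR)"
    using exp_post_loss_indep_series[OF ij] exp_post_loss_indep_series[OF ji] assms
    by (simp add: VoI_L_def min_absorb2 algebra_simps)
  moreover have "0 \<le> (p i - p j) * (CF - CR)" using assms by simp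
  ultimately show ?thesis by simp
qed

theorem mainTheorem5:
  fixes p :: "nat \<Rightarrow> real" and CF CR :: real
  assumes "0 \<le> p 1" "p 1 \<le> 1" "0 \<le> p 2" "p 2 \<le> 1"
    and "CF > 0" and "0 \<le> CR" and "CR \<le> CF / 2"
  shows "(\<forall>i j. {i, j} = {1, 2::nat} \<longrightarrow>
            exp_post_loss (indep_prob p) series_phi CF CR CR i = p i * CR + min CR (p j * CF))
       \<and> ((p 1 \<le> CR / CF \<and> p 2 \<le> CR / CF) \<longrightarrow>
            (\<forall>i j. {i, j} = {1, 2::nat} \<longrightarrow> p i \<ge> p j \<longrightarrow>
               VoI_L (indep_prob p) series_phi CF CR CR i \<ge> VoI_L (indep_prob p) series_phi CF CR CR j))"
proof -
  have cost: "2 * CR \<le> CF" using assms(7) by simp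
  have prob: "0 \<le> p k \<and> p k \<le> 1" if "k \<in> {1, 2}" for k
    using that assms(1-4) by auto
  have below: "p k * CF \<le> CR" if "k \<in> {1, 2}" and "p 1 \<le> CR / CF \<and> p 2 \<le> CR / CF" for k
    using that assms(5) by (auto simp: pos_le_divide_eq)
  show ?thesis
  proof (intro conjI allI impI)
    fix i j :: nat assume "{i, j} = {1, 2}"
    then show "exp_post_loss (indep_prob p) series_phi CF CR CR i = p i * CR + min CR (p j * CF)"
      using exp_post_loss_indep_series prob[of j] assms(6) cost by blast
  next
    fix i j :: nat
    assume "p 1 \<le> CR / CF \<and> p 2 \<le> CR / CF" and ij: "{i, j} = {1, 2}" and "p j \<le> p i"
    moreover have "i \<in> {1, 2}" "j \<in> {1, 2}" using ij by blast+
    ultimately show "VoI_L (indep_prob p) series_phi CF CR CR j \<le> VoI_L (indep_prob p) series_phi CF CR CR i"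
      using VoI_L_indep_series_mono prob below assms(6) cost by blast
  qed
qed

end
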